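(* Let $f\in\mathcal U(1)$ and $a_2=f''(0)/2$. Then $$\operatorname{Re}\sqrt{\frac{f(z)}{z}}>\alpha(|a_2|)\qquad\text{for } z\in\mathbb D,$$ where the square root is the branch equal to $1$ at $z=0$ and $$\alpha(x)=\frac{20+x-\sqrt{x^2+40x+16}}{24},\qquad 0\le x\le 2.$$
   Context: $\mathbb D=\{z\in\mathbb C:|z|<1\}$. $\mathcal A$ is the class of functions $f$ analytic in $\mathbb D$ with $f(z)=z+\sum_{k\ge2}a_kz^k$. For $f\in\mathcal A$ with $f(z)\ne0$ for $z\in\mathbb D\setminus\{0\}$, set $U_f(z)=\left(\frac{z}{f(z)}\right)^2f'(z)-1$. $\mathcal U(1)$ is the class of such $f\in\mathcal A$ with $|U_f(z)|<1$ for all $z\in\mathbb D$ (for such $f$ one has $|a_2|\le 2$ and $f(z)/z\ne0$ in $\mathbb D$). *)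

theory Defs
  imports "HOL-Analysis.Analysis"
begin

definition classA :: "(complex \<Rightarrow> complex) \<Rightarrow> bool" where
  "classA f \<longleftrightarrow> f holomorphic_on ball 0 1 \<and> f 0 = 0 \<and> deriv f 0 = 1"

text \<open>U_f(z) = (z/f(z))^2 f'(z) - 1 (for z \<noteq> 0; at z = 0 its removable value is 0).\<close>
definition U_op :: "(complex \<Rightarrow> complex) \<Rightarrow> complex \<Rightarrow> complex" where
  "U_op f z = (z / f z)^2 * deriv f z - 1"

definition classU1 :: "(complex \<Rightarrow> complex) \<Rightarrow> bool" where
  "classU1 f \<longleftrightarrow> classA f \<and> (\<forall>z\<in>ball 0 1 - {0}. f z \<noteq> 0)
      \<and> (\<forall>z\<in>ball 0 1 - {0}. cmod (U_op f z) < 1)"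

definition alpha :: "real \<Rightarrow> real" where
  "alpha x = (20 + x - sqrt (x^2 + 40*x + 16)) / 24"

end

theory Submission
  imports Defs "HOL-Complex_Analysis.Complex_Analysis"
begin

text \<open>
  Write f(z) = z g(z)^2, so that U_f = (g + 2 z g')/g^3 - 1 and a_2 = 2 g'(0). If Re g \<le> L somewhere,
  take a point z0 of least modulus with Re g(z0) = L. The Cayley map of the half-plane Re w > L turns g,
  restricted to |z| < |z0|, into a map V into the unit disc with V(0) = 0 and |V(z0)| = 1. Jack's lemma,
  in Osserman's sharp form, gives z0 V'(z0) = k V(z0) with k \<ge> 2/(1 + |z0| |V'(0)|). For L = alpha(|a_2|)
  this bound says exactly k \<ge> L/(1-L), and translated back to g an explicit sum of squares (nonnegative
  for 1/2 \<le> L \<le> 2/3) shows |U_f(z0)| \<ge> 1, a contradiction.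
\<close>

section \<open>Schwarz lemma with the derivative at the origin\<close>

lemma norm_le_of_pseudo_hyperbolic_le:
  fixes a v :: complex and r :: real
  assumes a1: "norm a < 1" and v1: "norm v < 1" and r0: "0 \<le> r" and r1: "r < 1"
    and H: "norm (v - a) \<le> r * norm (1 - cnj a * v)"
  shows "norm v \<le> (r + norm a) / (1 + norm a * r)"
proof -
  define A where "A = norm a"
  define P where "P = norm v"
  define R where "R = Re (cnj a * v)"
  have A0: "0 \<le> A" and P0: "0 \<le> P" by (auto simp: A_def P_def)
  have "R \<le> A * P" unfolding R_def A_def P_def
    by (metis complex_Re_le_cmod complex_mod_cnj norm_mult)
  moreover have "0 \<le> 1 - r^2" using r0 r1 by (simp add: power_le_one)
  ultimately have RAP: "2*R*(1 - r^2) \<le> 2*(A*P)*(1 - r^2)" by (simp add: mult_right_mono)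
  have "norm (v - a)^2 \<le> (r * norm (1 - cnj a * v))^2" using H by (intro power_mono) auto
  moreover have "norm (v - a)^2 = P^2 + A^2 - 2*R" "norm (1 - cnj a * v)^2 = 1 - 2*R + A^2*P^2"
    unfolding P_def A_def R_def cmod_power2 by (simp_all add: algebra_simps power2_eq_square)
  ultimately have "P^2 + A^2 - 2*R \<le> r^2 * (1 - 2*R + A^2*P^2)" by (simp add: power_mult_distrib)
  with RAP have XY: "((1+A*r)*P - (r+A)) * ((1-A*r)*P - (A-r)) \<le> 0"
    by (simp add: algebra_simps power2_eq_square)
  have "A * P \<le> 1" using a1 v1 A0 P0 by (intro mult_le_one) (auto simp: A_def P_def)
  hence "r * (A * P) \<le> r * 1" using r0 by (rule mult_left_mono)
  hence XleY: "(1+A*r)*P - (r+A) \<le> (1-A*r)*P - (A-r)" by (simp add: algebra_simps)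
  have "(1+A*r)*P \<le> r+A"
  proof (rule ccontr)
    assume "\<not> ?thesis"
    hence "0 < (1+A*r)*P - (r+A)" by simp
    moreover from this XleY have "0 < (1-A*r)*P - (A-r)" by linarith
    ultimately have "0 < ((1+A*r)*P - (r+A)) * ((1-A*r)*P - (A-r))" by (rule mult_pos_pos)
    with XY show False by linarith
  qed
  moreover have "0 < 1 + A*r" using A0 r0 by (simp add: add_pos_nonneg)
  ultimately show ?thesis by (simp add: A_def P_def pos_le_divide_eq mult.commute)
qed

lemma disc_self_map_norm_le:
  fixes h :: "complex \<Rightarrow> complex"
  assumes holh: "h holomorphic_on ball 0 1" and maps: "h ` ball 0 1 \<subseteq> ball 0 1" and z: "norm z < 1"
  shows "norm (h z) \<le> (norm z + norm (h 0)) / (1 + norm (h 0) * norm z)"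
proof -
  define a where "a = h 0"
  have a1: "norm a < 1" and hz: "norm (h z) < 1" using maps z by (auto simp: a_def image_subset_iff)
  define \<phi> where "\<phi> = Moebius_function 0 a \<circ> h"
  have "\<phi> holomorphic_on ball 0 1"
    unfolding \<phi>_def using holh Moebius_function_holomorphic[OF a1] maps by (rule holomorphic_on_compose_gen)
  moreover have "\<phi> 0 = 0" by (simp add: \<phi>_def a_def Moebius_function_eq_zero)
  moreover have "norm (\<phi> w) < 1" if "norm w < 1" for w
    using Moebius_function_norm_lt_1[OF a1] maps that by (auto simp: \<phi>_def image_subset_iff)
  ultimately have "norm (\<phi> z) \<le> norm z" using z by (rule Schwarz_Lemma(1))
  moreover have "norm (cnj a * h z) < 1"
    using a1 hz by (simp add: norm_mult) (metis mult_strict_mono' norm_ge_zero mult_1_right)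
  hence "1 - cnj a * h z \<noteq> 0" by auto
  ultimately have "norm (h z - a) \<le> norm z * norm (1 - cnj a * h z)"
    by (simp add: \<phi>_def Moebius_function_simple norm_divide divide_le_eq)
  thus ?thesis using norm_le_of_pseudo_hyperbolic_le[OF a1 hz norm_ge_zero z] by (simp add: a_def)
qed

lemma Schwarz_Lemma_deriv_bound:
  fixes W :: "complex \<Rightarrow> complex"
  assumes holW: "W holomorphic_on ball 0 1" and W0: "W 0 = 0"
    and Wlt: "\<And>z. norm z < 1 \<Longrightarrow> norm (W z) < 1" and z: "norm z < 1"
  shows "norm (W z) \<le> norm z * ((norm z + norm (deriv W 0)) / (1 + norm (deriv W 0) * norm z))"
proof -
  define A where "A = norm (deriv W 0)"
  have "A \<le> 1" using Schwarz_Lemma(2)[OF holW W0 Wlt, of 0] by (simp add: A_def)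
  then consider "A = 1" | "A < 1" by linarith
  then show ?thesis
  proof cases
    case 1
    have "1 + norm z > 0" by (simp add: add_pos_nonneg)
    then show ?thesis using 1 Schwarz_Lemma(1)[OF holW W0 Wlt z] by (simp add: A_def add.commute)
  next
    case 2
    obtain h where holh: "h holomorphic_on ball 0 1" and Wh: "\<And>z. norm z < 1 \<Longrightarrow> W z = z * h z"
      and h0: "deriv W 0 = h 0"
      using Schwarz3[OF holW W0] by blast
    have hle: "norm (h w) \<le> 1" if w: "norm w < 1" for w
    proof (cases "w = 0")
      case True
      thus ?thesis using 2 h0 by (simp add: A_def)
    next
      case False
      have "norm w * norm (h w) \<le> norm w * 1"
        using Schwarz_Lemma(1)[OF holW W0 Wlt w] Wh[OF w] by (simp add: norm_mult)
      thus ?thesis using False by simp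
    qed
    have "h ` ball 0 1 \<subseteq> ball 0 1"
    proof (rule image_subsetI)
      fix w :: complex assume "w \<in> ball 0 1"
      hence w: "norm w < 1" by simp
      show "h w \<in> ball 0 1"
      proof (rule ccontr)
        assume "h w \<notin> ball 0 1"
        with hle[OF w] have hw: "norm (h w) = 1" by simp
        have "h constant_on ball 0 1"
          by (rule maximum_modulus_principle[OF holh open_ball connected_ball open_ball order_refl, of w])
            (use w hle hw in auto)
        hence "h 0 = h w" using w by (auto simp: constant_on_def)
        thus False using 2 h0 hw by (simp add: A_def)
      qed
    qed
    hence "norm (h z) \<le> (norm z + A) / (1 + A * norm z)"
      using disc_self_map_norm_le[OF holh _ z] h0 by (simp add: A_def)
    hence "norm z * norm (h z) \<le> norm z * ((norm z + A) / (1 + A * norm z))"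
      by (rule mult_left_mono) simp
    thus ?thesis using Wh[OF z] by (simp add: A_def norm_mult)
  qed
qed

section \<open>Jack's lemma\<close>

lemma has_real_derivative_norm_power2_of_real:
  fixes F :: "complex \<Rightarrow> complex"
  assumes "(F has_field_derivative F') (at (of_real t))"
  shows "((\<lambda>s. norm (F (of_real s))^2) has_real_derivative 2 * Re (cnj (F (of_real t)) * F')) (at t)"
proof -
  have v: "((\<lambda>s. F (of_real s)) has_vector_derivative F') (at t)"
    using has_vector_derivative_real_field[OF assms] .
  have "((\<lambda>s. Re (F (of_real s))^2 + Im (F (of_real s))^2) has_real_derivative
         2 * Re (F (of_real t)) * Re F' + 2 * Im (F (of_real t)) * Im F') (at t)"
    by (auto intro!: derivative_eq_intros v)
  thus ?thesis by (simp add: cmod_power2 algebra_simps)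
qed

lemma has_real_derivative_le_of_le_left:
  fixes \<phi> \<psi> :: "real \<Rightarrow> real"
  assumes \<phi>: "(\<phi> has_real_derivative \<phi>') (at x)" and \<psi>: "(\<psi> has_real_derivative \<psi>') (at x)"
    and eq: "\<phi> x = \<psi> x" and "0 < d" and le: "\<And>t. x - d < t \<Longrightarrow> t < x \<Longrightarrow> \<phi> t \<le> \<psi> t"
  shows "\<psi>' \<le> \<phi>'"
proof (rule ccontr)
  assume "\<not> \<psi>' \<le> \<phi>'"
  hence "\<phi>' - \<psi>' < 0" by simp
  then obtain e where "0 < e" and e: "\<And>h. 0 < h \<Longrightarrow> h < e \<Longrightarrow> \<phi> x - \<psi> x < \<phi> (x - h) - \<psi> (x - h)"
    using DERIV_neg_dec_left[OF DERIV_diff[OF \<phi> \<psi>]] by auto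
  define h where "h = min d e / 2"
  have "0 < h" "h < e" "h < d" using \<open>0 < d\<close> \<open>0 < e\<close> by (auto simp: h_def)
  thus False using e[of h] le[of "x - h"] eq by auto
qed

lemma Im_cnj_mult_deriv_eq_0_at_circle_max:
  fixes W :: "complex \<Rightarrow> complex"
  assumes dW: "(W has_field_derivative W') (at u)"
    and max: "\<And>s::real. norm (W (u * exp (\<i> * of_real s))) \<le> norm (W u)"
  shows "Im (cnj (W u) * (u * W')) = 0"
proof -
  have "(W has_field_derivative W') (at (u * exp (\<i> * of_real 0)))" using dW by simp
  moreover have "((\<lambda>\<zeta>. u * exp (\<i> * \<zeta>)) has_field_derivative u * \<i>) (at (of_real 0))"
    by (auto intro!: derivative_eq_intros)
  ultimately have "((\<lambda>\<zeta>. W (u * exp (\<i> * \<zeta>))) has_field_derivative W' * (u * \<i>)) (at (of_real 0))"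
    by (rule DERIV_chain2)
  from has_real_derivative_norm_power2_of_real[OF this]
  have "((\<lambda>s. norm (W (u * exp (\<i> * of_real s)))^2) has_real_derivative 2 * Re (cnj (W u) * (W' * (u * \<i>)))) (at 0)"
    by simp
  hence "2 * Re (cnj (W u) * (W' * (u * \<i>))) = 0"
    by (rule DERIV_local_max[of _ _ _ 1]) (use max in \<open>auto intro: power_mono\<close>)
  thus ?thesis by (simp add: algebra_simps)
qed

lemma Re_cnj_mult_deriv_ge_at_boundary:
  fixes W :: "complex \<Rightarrow> complex"
  assumes holW: "W holomorphic_on ball 0 1" and W0: "W 0 = 0" and Wlt: "\<And>z. norm z < 1 \<Longrightarrow> norm (W z) < 1"
    and dW: "(W has_field_derivative W') (at u)" and u1: "norm u = 1" and Wu: "norm (W u) = 1"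
  shows "2 / (1 + norm (deriv W 0)) \<le> Re (cnj (W u) * (u * W'))"
proof -
  define A where "A = norm (deriv W 0)"
  have A: "0 < 1 + A" "0 < 1 + (A*A + A*2)" by (simp_all add: A_def add_pos_nonneg)
  have "(W has_field_derivative W') (at (of_real 1 * u))" using dW by simp
  moreover have "((\<lambda>\<zeta>. \<zeta> * u) has_field_derivative u) (at (of_real 1))"
    by (auto intro!: derivative_eq_intros)
  ultimately have "((\<lambda>\<zeta>. W (\<zeta> * u)) has_field_derivative W' * u) (at (of_real 1))"
    by (rule DERIV_chain2)
  from has_real_derivative_norm_power2_of_real[OF this]
  have radial: "((\<lambda>t. norm (W (of_real t * u))^2) has_real_derivative 2 * Re (cnj (W u) * (u * W'))) (at 1)"
    by (simp add: algebra_simps)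
  have "((\<lambda>t. t*(t+A)/(1+A*t)) has_real_derivative 2/(1+A)) (at 1)"
    using A by (auto intro!: derivative_eq_intros simp: field_simps)
  from DERIV_power[OF this, of 2]
  have bound_deriv: "((\<lambda>t. (t*(t+A)/(1+A*t))^2) has_real_derivative 4/(1+A)) (at 1)"
    using A by (simp add: field_simps)
  have bound: "norm (W (of_real t * u))^2 \<le> (t*(t+A)/(1+A*t))^2" if "0 < t" "t < 1" for t
  proof -
    have "norm (of_real t * u) = t" using that u1 by (simp add: norm_mult)
    hence "norm (W (of_real t * u)) \<le> t * ((t + A) / (1 + A * t))"
      using Schwarz_Lemma_deriv_bound[OF holW W0 Wlt, of "of_real t * u"] that by (simp add: A_def)
    thus ?thesis by (intro power_mono) simp_all
  qed
  \<comment> \<open>|W(tu)|^2 stays below the squared Schwarz bound and touches it at t = 1\<close>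
  have "norm (W (of_real 1 * u))^2 = (1*(1+A)/(1+A*1))^2" using Wu A by simp
  hence "4/(1+A) \<le> 2 * Re (cnj (W u) * (u * W'))"
    by (rule has_real_derivative_le_of_le_left[OF radial bound_deriv _ zero_less_one]) (simp add: bound)
  thus ?thesis by (simp add: A_def)
qed

lemma Jack_lemma_deriv_bound:
  fixes W :: "complex \<Rightarrow> complex"
  assumes holW: "W holomorphic_on S" and S: "open S" "cball 0 1 \<subseteq> S" and W0: "W 0 = 0"
    and Wlt: "\<And>z. norm z < 1 \<Longrightarrow> norm (W z) < 1" and Wle: "\<And>z. norm z = 1 \<Longrightarrow> norm (W z) \<le> 1"
    and u1: "norm u = 1" and Wu: "norm (W u) = 1"
  obtains k :: real where "u * deriv W u = of_real k * W u" and "1 \<le> k" and "2 / (1 + norm (deriv W 0)) \<le> k"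
proof -
  have holB: "W holomorphic_on ball 0 1" using holW S(2) ball_subset_cball by (blast intro: holomorphic_on_subset)
  define q where "q = cnj (W u) * (u * deriv W u)"
  have "u \<in> S" using S(2) u1 by auto
  hence dW: "(W has_field_derivative deriv W u) (at u)" by (rule holomorphic_derivI[OF holW S(1)])
  have "Im q = 0" unfolding q_def
    by (rule Im_cnj_mult_deriv_eq_0_at_circle_max[OF dW]) (use Wle u1 Wu in \<open>simp add: norm_mult\<close>)
  hence "q = of_real (Re q)" by (simp add: complex_eq_iff)
  moreover have "cnj (W u) * W u = 1" using complex_norm_square[of "W u"] Wu by (simp add: mult.commute)
  hence "u * deriv W u = q * W u" by (simp add: q_def algebra_simps)
  moreover have "2 / (1 + norm (deriv W 0)) \<le> Re q"
    unfolding q_def by (rule Re_cnj_mult_deriv_ge_at_boundary[OF holB W0 Wlt dW u1 Wu])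
  moreover have "1 \<le> 2 / (1 + norm (deriv W 0))"
    using Schwarz_Lemma(2)[OF holB W0 Wlt, of 0] by (simp add: add_pos_nonneg le_divide_eq)
  ultimately show ?thesis by (intro that[of "Re q"]) simp_all
qed

lemma Jack_lemma_deriv_bound_radius:
  fixes V :: "complex \<Rightarrow> complex" and r :: real
  assumes holV: "V holomorphic_on S" and S: "open S" "cball 0 r \<subseteq> S" and r: "0 < r" and V0: "V 0 = 0"
    and Vlt: "\<And>z. norm z < r \<Longrightarrow> norm (V z) < 1" and Vle: "\<And>z. norm z = r \<Longrightarrow> norm (V z) \<le> 1"
    and z0: "norm z0 = r" and Vz0: "norm (V z0) = 1"
  obtains k :: real where "z0 * deriv V z0 = of_real k * V z0" and "1 \<le> k" and "2 / (1 + r * norm (deriv V 0)) \<le> k"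
proof -
  define W where "W = (\<lambda>\<zeta>. V (of_real r * \<zeta>))"
  define T where "T = (\<lambda>\<zeta>. of_real r * \<zeta>) -` S"
  have "open T" unfolding T_def using S(1) by (intro continuous_open_vimage continuous_intros)
  moreover have "cball 0 1 \<subseteq> T"
  proof
    fix \<zeta> :: complex assume "\<zeta> \<in> cball 0 1"
    hence "norm (of_real r * \<zeta>) \<le> r" using r by (simp add: norm_mult mult_left_le)
    thus "\<zeta> \<in> T" using S(2) by (auto simp: T_def)
  qed
  ultimately have T: "open T" "cball 0 1 \<subseteq> T" by blast+
  have dW: "(W has_field_derivative of_real r * deriv V (of_real r * \<zeta>)) (at \<zeta>)" if "\<zeta> \<in> T" for \<zeta>
  proof -
    have "(V has_field_derivative deriv V (of_real r * \<zeta>)) (at (of_real r * \<zeta>))"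
      using that by (intro holomorphic_derivI[OF holV S(1)]) (simp add: T_def)
    moreover have "((\<lambda>\<zeta>. of_real r * \<zeta>) has_field_derivative of_real r) (at \<zeta>)"
      by (auto intro!: derivative_eq_intros)
    ultimately have "((\<lambda>\<zeta>. V (of_real r * \<zeta>)) has_field_derivative deriv V (of_real r * \<zeta>) * of_real r) (at \<zeta>)"
      by (rule DERIV_chain2)
    thus ?thesis by (simp add: W_def mult.commute)
  qed
  have "W holomorphic_on T" using T(1) dW by (auto simp: holomorphic_on_open)
  moreover have "norm (W \<zeta>) < 1" if "norm \<zeta> < 1" for \<zeta>
    using Vlt[of "of_real r * \<zeta>"] that r by (simp add: W_def norm_mult)
  moreover have "norm (W \<zeta>) \<le> 1" if "norm \<zeta> = 1" for \<zeta>
    using Vle[of "of_real r * \<zeta>"] that r by (simp add: W_def norm_mult)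
  moreover have "norm (z0 / of_real r) = 1" and rz0: "of_real r * (z0 / of_real r) = z0"
    using z0 r by (simp_all add: norm_divide)
  ultimately obtain k :: real where
    k: "z0 / of_real r * deriv W (z0 / of_real r) = of_real k * W (z0 / of_real r)"
    and "1 \<le> k" and kA: "2 / (1 + norm (deriv W 0)) \<le> k"
    using Jack_lemma_deriv_bound[OF _ T, of W "z0 / of_real r"] V0 Vz0 by (auto simp: W_def)
  have "0 \<in> T" "z0 / of_real r \<in> T" using T(2) z0 r by (auto simp: norm_divide)
  note derivs = this[THEN dW, THEN DERIV_imp_deriv]
  show ?thesis
  proof (rule that)
    from k r have "z0 / of_real r * (of_real r * deriv V z0) = of_real k * V z0"
      unfolding derivs rz0 by (simp add: W_def rz0 del: times_divide_eq_left)
    thus "z0 * deriv V z0 = of_real k * V z0" using r by (simp add: field_simps)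
    show "1 \<le> k" by fact
    show "2 / (1 + r * norm (deriv V 0)) \<le> k" using kA r unfolding derivs by (simp add: norm_mult)
  qed
qed

section \<open>The Cayley map of a half-plane\<close>

text \<open>The pole 2L - 1 is the mirror image of 1 in the line Re w = L, so the map sends the half-plane
  Re w > L onto the unit disc and 1 to 0.\<close>

definition half_plane_Cayley :: "real \<Rightarrow> complex \<Rightarrow> complex" where
  "half_plane_Cayley L w = (w - 1) / (w - of_real (2*L - 1))"

lemma norm_half_plane_Cayley_power2:
  assumes "L < 1" "L \<le> Re w"
  shows "norm (half_plane_Cayley L w)^2 = 1 - 4*(1-L)*(Re w - L) / norm (w - of_real (2*L - 1))^2"
proof -
  have "w \<noteq> of_real (2*L - 1)" using assms by auto
  moreover have "norm (w - 1)^2 = norm (w - of_real (2*L - 1))^2 - 4*(1-L)*(Re w - L)"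
    unfolding cmod_power2 by (simp add: algebra_simps power2_eq_square)
  ultimately show ?thesis by (simp add: half_plane_Cayley_def norm_divide power_divide field_simps)
qed

lemma norm_half_plane_Cayley_lt_1:
  assumes "L < 1" "L < Re w"
  shows "norm (half_plane_Cayley L w) < 1"
proof -
  have "w \<noteq> of_real (2*L - 1)" using assms by auto
  hence "0 < 4*(1-L)*(Re w - L) / norm (w - of_real (2*L - 1))^2"
    using assms by simp
  hence "norm (half_plane_Cayley L w)^2 < 1^2"
    using norm_half_plane_Cayley_power2[of L w] assms by simp
  thus ?thesis by (rule power_less_imp_less_base) simp
qed

lemma norm_half_plane_Cayley_le_1:
  assumes "L < 1" "L \<le> Re w"
  shows "norm (half_plane_Cayley L w) \<le> 1"
proof -
  have "0 \<le> 4*(1-L)*(Re w - L) / norm (w - of_real (2*L - 1))^2"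
    using assms by simp
  hence "norm (half_plane_Cayley L w)^2 \<le> 1^2"
    using norm_half_plane_Cayley_power2[OF assms] by simp
  thus ?thesis by (rule power2_le_imp_le) simp
qed

lemma norm_half_plane_Cayley_eq_1:
  assumes "L < 1" "Re w = L"
  shows "norm (half_plane_Cayley L w) = 1"
proof -
  have "norm (half_plane_Cayley L w)^2 = 1^2"
    using assms norm_half_plane_Cayley_power2[of L w] by simp
  thus ?thesis by (rule power2_eq_imp_eq) simp_all
qed

lemma half_plane_Cayley_has_field_derivative:
  assumes "w \<noteq> of_real (2*L - 1)"
  shows "(half_plane_Cayley L has_field_derivative 2 * of_real (1-L) / (w - of_real (2*L - 1))^2) (at w)"
proof -
  have "(half_plane_Cayley L has_field_derivative
         ((w - of_real (2*L - 1)) - (w - 1)) / (w - of_real (2*L - 1))^2) (at w)"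
    unfolding half_plane_Cayley_def[abs_def] using assms
    by (auto intro!: derivative_eq_intros simp: power2_eq_square)
  thus ?thesis by (simp add: algebra_simps)
qed

lemma half_plane_Cayley_radial_relation:
  fixes z D G :: complex and k L :: real
  assumes L1: "L < 1" and RG: "Re G = L"
    and rel: "z * D * (2 * of_real (1-L) / (G - of_real (2*L - 1))^2) = of_real k * half_plane_Cayley L G"
  shows "2 * z * D = - of_real (k * ((1-L)^2 + Im G^2) / (1-L))"
proof -
  define P where "P = G - of_real (2*L - 1)"
  have "P \<noteq> 0" unfolding P_def using L1 RG by (auto simp: complex_eq_iff)
  hence cancel: "x / P^2 = y / P \<longleftrightarrow> x = y * P" for x y
    by (simp add: field_simps power2_eq_square)
  from rel have "z * D * (2 * of_real (1-L)) / P^2 = of_real k * (G - 1) / P"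
    unfolding half_plane_Cayley_def P_def[symmetric] by simp
  hence "z * D * (2 * of_real (1-L)) = of_real k * ((G - 1) * P)"
    unfolding cancel by (simp add: mult.assoc)
  also have "(G - 1) * P = - of_real ((1-L)^2 + Im G^2)"
    using RG by (simp add: P_def complex_eq_iff power2_eq_square algebra_simps)
  finally show ?thesis using L1 by (simp add: field_simps)
qed

lemma Jack_lemma_half_plane:
  fixes g :: "complex \<Rightarrow> complex" and L :: real
  assumes holg: "g holomorphic_on ball 0 1" and g0: "g 0 = 1" and L1: "L < 1"
    and z0: "norm z0 < 1" and Rz0: "Re (g z0) = L"
    and inner: "\<And>z. norm z < norm z0 \<Longrightarrow> L < Re (g z)" and boundary: "\<And>z. norm z \<le> norm z0 \<Longrightarrow> L \<le> Re (g z)"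
  obtains k :: real where "2 * z0 * deriv g z0 = - of_real (k * ((1-L)^2 + Im (g z0)^2) / (1-L))"
    and "1 \<le> k" and "2 / (1 + norm z0 * norm (deriv g 0) / (2*(1-L))) \<le> k"
proof -
  define r where "r = norm z0"
  have "z0 \<noteq> 0" using Rz0 g0 L1 by auto
  hence r0: "0 < r" by (simp add: r_def)
  define S where "S = ball 0 1 \<inter> (\<lambda>z. Re (g z)) -` {2*L - 1<..}"
  have S: "open S" unfolding S_def
    by (rule continuous_open_preimage) (auto intro: continuous_intros holomorphic_on_imp_continuous_on[OF holg])
  have cbS: "cball 0 r \<subseteq> S" using boundary z0 L1 by (fastforce simp: S_def r_def)
  define V where "V = half_plane_Cayley L \<circ> g"
  have dV: "(V has_field_derivative deriv g z * (2 * of_real (1-L) / (g z - of_real (2*L - 1))^2)) (at z)"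
    if "z \<in> S" for z
  proof -
    have "(g has_field_derivative deriv g z) (at z)"
      using that by (intro holomorphic_derivI[OF holg]) (auto simp: S_def)
    moreover have "g z \<noteq> of_real (2*L - 1)" using that by (auto simp: S_def)
    ultimately show ?thesis unfolding V_def
      by (metis DERIV_chain half_plane_Cayley_has_field_derivative mult.commute)
  qed
  have "V holomorphic_on S" using S dV by (auto simp: holomorphic_on_open)
  moreover have "V 0 = 0" by (simp add: V_def g0 half_plane_Cayley_def)
  moreover have "norm (V z) < 1" if "norm z < r" for z
    using norm_half_plane_Cayley_lt_1[OF L1 inner] that by (simp add: V_def r_def)
  moreover have "norm (V z) \<le> 1" if "norm z = r" for z
    using norm_half_plane_Cayley_le_1[OF L1 boundary] that by (simp add: V_def r_def)
  moreover have "norm (V z0) = 1" using norm_half_plane_Cayley_eq_1[OF L1 Rz0] by (simp add: V_def)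
  ultimately obtain k :: real where k: "z0 * deriv V z0 = of_real k * V z0" and "1 \<le> k"
    and kA: "2 / (1 + r * norm (deriv V 0)) \<le> k"
    using Jack_lemma_deriv_bound_radius[OF _ S cbS r0 _ _ _ r_def[symmetric]] by blast
  have "0 \<in> S" "z0 \<in> S" using cbS r0 by (auto simp: r_def)
  note derivs = dV[THEN DERIV_imp_deriv, OF \<open>0 \<in> S\<close>] dV[THEN DERIV_imp_deriv, OF \<open>z0 \<in> S\<close>]
  from k have "2 * z0 * deriv g z0 = - of_real (k * ((1-L)^2 + Im (g z0)^2) / (1-L))"
    unfolding derivs by (intro half_plane_Cayley_radial_relation[OF L1 Rz0]) (simp add: V_def mult.assoc)
  moreover have "norm (deriv V 0) = norm (deriv g 0) / (2*(1-L))"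
  proof -
    have "norm (of_real (2 - 2*L) :: complex) = 2 - 2*L" unfolding norm_of_real using L1 by simp
    thus ?thesis by (simp add: derivs g0 norm_divide norm_mult power2_eq_square)
  qed
  ultimately show ?thesis using kA \<open>1 \<le> k\<close> by (intro that) (simp_all add: r_def)
qed

section \<open>The extremal point\<close>

lemma least_norm_point_Re_le:
  fixes g :: "complex \<Rightarrow> complex" and L :: real
  assumes contg: "continuous_on (ball 0 1) g" and g0: "L < Re (g 0)" and z1: "norm z1 < 1" "Re (g z1) \<le> L"
  obtains z0 where "norm z0 < 1" "Re (g z0) = L"
    "\<And>z. norm z < norm z0 \<Longrightarrow> L < Re (g z)" "\<And>z. norm z \<le> norm z0 \<Longrightarrow> L \<le> Re (g z)"
proof -
  define K where "K = cball 0 (norm z1) \<inter> (\<lambda>z. Re (g z)) -` {..L}"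
  have "continuous_on (cball 0 (norm z1)) (\<lambda>z. Re (g z))"
    using z1 by (intro continuous_intros continuous_on_subset[OF contg]) auto
  hence "closed K" unfolding K_def by (rule continuous_closed_preimage) auto
  moreover have "bounded K" by (rule bounded_subset[OF bounded_cball]) (auto simp: K_def)
  ultimately have "compact K" by (simp add: compact_eq_bounded_closed)
  moreover have "z1 \<in> K" using z1 by (simp add: K_def)
  ultimately obtain z0 where z0: "z0 \<in> K" and min: "\<And>z. z \<in> K \<Longrightarrow> norm z0 \<le> norm z"
    using continuous_attains_inf[OF _ _ continuous_on_norm_id] by (metis empty_iff)
  have z0_lt: "norm z0 < 1" and Rz0: "Re (g z0) \<le> L" using z0 z1 by (auto simp: K_def)
  have inner: "L < Re (g z)" if "norm z < norm z0" for z
  proof (rule ccontr)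
    assume "\<not> L < Re (g z)"
    hence "z \<in> K" using that z0 by (auto simp: K_def)
    from min[OF this] that show False by simp
  qed
  have "z0 \<noteq> 0" using Rz0 g0 by auto
  have boundary: "L \<le> Re (g z)" if "norm z \<le> norm z0" for z
  proof (rule continuous_ge_on_closure[of "ball 0 (norm z0)" "\<lambda>z. Re (g z)" z L])
    show "continuous_on (closure (ball 0 (norm z0))) (\<lambda>z. Re (g z))"
      using \<open>z0 \<noteq> 0\<close> z0_lt by (auto intro!: continuous_intros continuous_on_subset[OF contg])
  qed (use that \<open>z0 \<noteq> 0\<close> inner in \<open>auto simp: less_imp_le\<close>)
  have "Re (g z0) = L" using boundary[of z0] Rz0 by simp
  with z0_lt inner boundary show ?thesis by (intro that)
qed

lemma Complex_power3: "(Complex a b)^3 = Complex (a^3 - 3*a*b^2) (3*a^2*b - b^3)"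
  by (simp add: complex_eq_iff power3_eq_cube power2_eq_square algebra_simps)

lemma norm_cube_le_norm_diff_cube:
  fixes L b k :: real
  assumes L1: "1/2 \<le> L" and L2: "L \<le> 2/3" and kL: "L/(1-L) \<le> k"
  shows "norm (Complex L b) ^ 3 \<le> norm (Complex L b - of_real (k*((1-L)^2+b^2)/(1-L)) - Complex L b ^ 3)"
proof -
  define c where "c = 1 - L"
  define s where "s = b / c"
  have c0: "c > 0" and c2: "c \<le> 1/2" using L1 L2 by (auto simp: c_def)
  have ck: "L \<le> c*k" using kL c0 by (simp add: c_def field_simps)
  have bs: "b = c * s" using c0 by (simp add: s_def)
  have "k*((1-L)^2+b^2)/(1-L) = c * k * (1+s^2)"
    using c0 by (simp add: bs c_def[symmetric] field_simps power2_eq_square)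
  hence G: "Complex L b = Complex L (c * s)" and
    N: "Complex L b - of_real (k*((1-L)^2+b^2)/(1-L)) = Complex (L - c * k * (1+s^2)) (c * s)"
    by (simp_all add: bs complex_eq_iff)
  define w where "w = c * k * (1+s^2) - L*(1+s^2)"
  have w0: "w \<ge> 0" using ck by (simp add: w_def mult_right_mono)
  define d where "d = L - 1/2"
  have d0: "0 \<le> d" and d1: "d \<le> 1/6" using L1 L2 by (auto simp: d_def)
  define P1 where "P1 = L^2 - 6*L^2*c^2 + 2*c^4"
  define P2 where "P2 = 2*L^4 + c^2 - 6*L^2*c^2"
  define C where "C = 2*L * s^2*(1-3*c^2) + 2*L^3"
  have "P1 = d^2*(7 - 4*d - 4*d^2)" "P2 = d^2*(7 + 4*d - 4*d^2)"
    by (simp_all add: P1_def P2_def d_def c_def algebra_simps power2_eq_square power4_eq_xxxx)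
  moreover have "d*d \<le> 1/6 * (1/6)" using d0 d1 by (intro mult_mono) auto
  ultimately have P1: "P1 \<ge> 0" and P2: "P2 \<ge> 0" using d0 d1
    by (auto intro!: mult_nonneg_nonneg simp: power2_eq_square)
  have "c*c \<le> 1/2*(1/2)" using c0 c2 by (intro mult_mono) auto
  hence C: "C \<ge> 0" unfolding C_def using L1
    by (intro add_nonneg_nonneg mult_nonneg_nonneg) (auto simp: power2_eq_square)
  have "norm (Complex (L - c * k * (1+s^2)) (c * s) - Complex L (c * s) ^ 3)^2 - (norm (Complex L (c * s))^2)^3
      = w^2 + w*C + s^2*(s^2*P1 + P2)"
    unfolding Complex_power3 cmod_power2 w_def C_def P1_def P2_def
    by (simp add: algebra_simps power2_eq_square power3_eq_cube power4_eq_xxxx)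
  also have "\<dots> \<ge> 0" using w0 C P1 P2 by (intro add_nonneg_nonneg mult_nonneg_nonneg) auto
  finally have "(norm (Complex L (c * s)) ^ 3)^2 \<le> norm (Complex (L - c * k * (1+s^2)) (c * s) - Complex L (c * s) ^ 3)^2"
    by (simp add: power_mult[symmetric] power_mult_distrib)
  hence "norm (Complex L (c * s)) ^ 3 \<le> norm (Complex (L - c * k * (1+s^2)) (c * s) - Complex L (c * s) ^ 3)"
    by (rule power2_le_imp_le) simp
  thus ?thesis unfolding N by (simp only: G)
qed

lemma one_le_norm_U_of_radial_relation:
  fixes G z D :: complex and L k :: real
  assumes L1: "1/2 \<le> L" and L2: "L \<le> 2/3" and kL: "L/(1-L) \<le> k" and RG: "Re G = L"
    and rel: "2 * z * D = - of_real (k * ((1-L)^2 + Im G^2) / (1-L))"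
  shows "1 \<le> norm ((G + 2 * z * D) / G^3 - 1)"
proof -
  have "G \<noteq> 0" using RG L1 by auto
  define N where "N = G - of_real (k * ((1-L)^2 + Im G^2) / (1-L))"
  have GC: "Complex L (Im G) = G" using RG by (simp add: complex_eq_iff)
  have "(G + 2 * z * D) / G^3 - 1 = (N - G^3) / G^3"
    using \<open>G \<noteq> 0\<close> by (simp add: rel N_def diff_divide_distrib)
  moreover have "norm G ^ 3 \<le> norm (N - G^3)"
    using norm_cube_le_norm_diff_cube[OF L1 L2 kL, of "Im G"] unfolding N_def by (simp only: GC)
  hence "1 \<le> norm ((N - G^3) / G^3)"
    using \<open>G \<noteq> 0\<close> by (simp add: norm_divide norm_power le_divide_eq)
  ultimately show ?thesis by simp
qed

text \<open>alpha x solves 8(1 - L)^2 = L (4(1 - L) + x), i.e. it is where Osserman's bound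
  2/(1 + x/(4(1 - L))) meets L/(1 - L); for x > 2 the value L = 1/2 already works.\<close>

lemma alpha_admissible:
  assumes x0: "0 \<le> x"
  obtains L where "alpha x \<le> L" "1/2 \<le> L" "L \<le> 2/3" "L/(1-L) \<le> max 1 (2/(1 + x/(4*(1-L))))"
proof (cases "x \<le> 2")
  case True
  define S where "S = sqrt (x^2 + 40*x + 16)"
  have S2: "S^2 = x^2 + 40*x + 16" unfolding S_def using x0 by simp
  have "x + 4 \<le> S" unfolding S_def using x0 by (intro real_le_rsqrt) (simp add: power2_eq_square algebra_simps)
  moreover have "S \<le> sqrt ((x+8)^2)"
    unfolding S_def using True by (intro real_sqrt_le_mono) (simp add: power2_eq_square algebra_simps)
  moreover have a: "alpha x = (20 + x - S)/24" by (simp add: alpha_def S_def)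
  ultimately have bounds: "1/2 \<le> alpha x" "alpha x \<le> 2/3" using x0 by simp_all
  have "8*(1 - alpha x)^2 = alpha x * (4*(1 - alpha x) + x)"
    unfolding a using S2 by (simp add: field_simps power2_eq_square)
  hence "alpha x/(1 - alpha x) = 2/(1 + x/(4*(1 - alpha x)))"
    using bounds x0 by (simp add: field_simps power2_eq_square)
  with bounds show ?thesis by (intro that[of "alpha x"]) simp_all
next
  case False
  have "sqrt ((x+8)^2) \<le> sqrt (x^2 + 40*x + 16)"
    using False by (intro real_sqrt_le_mono) (simp add: power2_eq_square algebra_simps)
  hence "alpha x \<le> 1/2" using x0 by (simp add: alpha_def)
  thus ?thesis by (intro that[of "1/2"]) simp_all
qed

lemma Re_gt_of_norm_U_lt_1:
  fixes g :: "complex \<Rightarrow> complex" and L :: real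
  assumes holg: "g holomorphic_on ball 0 1" and g0: "g 0 = 1"
    and U: "\<And>z. norm z < 1 \<Longrightarrow> z \<noteq> 0 \<Longrightarrow> norm ((g z + 2 * z * deriv g z) / g z ^ 3 - 1) < 1"
    and L1: "1/2 \<le> L" and L2: "L \<le> 2/3" and L3: "L/(1-L) \<le> max 1 (2/(1 + norm (deriv g 0) / (2*(1-L))))"
    and z: "norm z < 1"
  shows "L < Re (g z)"
proof (rule ccontr)
  assume "\<not> L < Re (g z)"
  hence "Re (g z) \<le> L" by simp
  moreover have "L < Re (g 0)" using g0 L2 by simp
  ultimately obtain z0 where z0: "norm z0 < 1" and Rz0: "Re (g z0) = L"
    and inner: "\<And>z. norm z < norm z0 \<Longrightarrow> L < Re (g z)" and boundary: "\<And>z. norm z \<le> norm z0 \<Longrightarrow> L \<le> Re (g z)"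
    using least_norm_point_Re_le[OF holomorphic_on_imp_continuous_on[OF holg] _ z] by blast
  have "L < 1" using L2 by simp
  obtain k :: real where dg: "2 * z0 * deriv g z0 = - of_real (k * ((1-L)^2 + Im (g z0)^2) / (1-L))"
    and "1 \<le> k" and kA: "2 / (1 + norm z0 * norm (deriv g 0) / (2*(1-L))) \<le> k"
    by (rule Jack_lemma_half_plane[OF holg g0 \<open>L < 1\<close> z0 Rz0 inner boundary])
  have "L/(1-L) \<le> k"
  proof (cases "L/(1-L) \<le> 1")
    case False
    hence "L/(1-L) \<le> 2/(1 + norm (deriv g 0) / (2*(1-L)))" using L3 by simp
    also have "\<dots> \<le> 2 / (1 + norm z0 * norm (deriv g 0) / (2*(1-L)))"
    proof (rule divide_left_mono)
      have "norm z0 * norm (deriv g 0) \<le> norm (deriv g 0)" using z0 by (simp add: mult_left_le_one_le)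
      thus "1 + norm z0 * norm (deriv g 0) / (2*(1-L)) \<le> 1 + norm (deriv g 0) / (2*(1-L))"
        using L2 by (simp add: divide_right_mono)
      show "0 < (1 + norm (deriv g 0) / (2*(1-L))) * (1 + norm z0 * norm (deriv g 0) / (2*(1-L)))"
        using L2 by (intro mult_pos_pos add_pos_nonneg) simp_all
    qed simp
    finally show ?thesis using kA by simp
  qed (use \<open>1 \<le> k\<close> in simp)
  have "z0 \<noteq> 0" using Rz0 g0 L2 by auto
  with U[OF z0] one_le_norm_U_of_radial_relation[OF L1 L2 \<open>L/(1-L) \<le> k\<close> Rz0 dg] show False by simp
qed

lemma deriv_eq_mult_power2:
  fixes f g :: "complex \<Rightarrow> complex"
  assumes holg: "g holomorphic_on ball 0 1" and fg: "\<And>z. norm z < 1 \<Longrightarrow> f z = z * g z ^ 2" and z: "norm z < 1"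
  shows "deriv f z = g z ^ 2 + 2 * z * g z * deriv g z"
proof -
  have "(g has_field_derivative deriv g z) (at z)" using z by (intro holomorphic_derivI[OF holg]) auto
  hence "((\<lambda>w. w * g w ^ 2) has_field_derivative g z ^ 2 + 2 * z * g z * deriv g z) (at z)"
    by (auto intro!: derivative_eq_intros simp: algebra_simps)
  hence "(f has_field_derivative g z ^ 2 + 2 * z * g z * deriv g z) (at z)"
    by (rule has_field_derivative_transform_within_open[of _ _ _ "ball 0 1"]) (use z fg in auto)
  thus ?thesis by (rule DERIV_imp_deriv)
qed

lemma deriv2_at_0_eq_mult_power2:
  fixes f g :: "complex \<Rightarrow> complex"
  assumes holg: "g holomorphic_on ball 0 1" and fg: "\<And>z. norm z < 1 \<Longrightarrow> f z = z * g z ^ 2"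
  shows "deriv (deriv f) 0 = 4 * g 0 * deriv g 0"
proof -
  have "(g has_field_derivative deriv g 0) (at 0)" by (intro holomorphic_derivI[OF holg]) auto
  moreover have "(deriv g has_field_derivative deriv (deriv g) 0) (at 0)"
    by (intro holomorphic_derivI[OF holomorphic_deriv[OF holg]]) auto
  ultimately have "((\<lambda>w. g w ^ 2 + 2 * w * g w * deriv g w) has_field_derivative 4 * g 0 * deriv g 0) (at 0)"
    by (auto intro!: derivative_eq_intros simp: algebra_simps)
  hence "(deriv f has_field_derivative 4 * g 0 * deriv g 0) (at 0)"
    by (rule has_field_derivative_transform_within_open[of _ _ _ "ball 0 1"])
      (auto simp: deriv_eq_mult_power2[OF holg fg])
  thus ?thesis by (rule DERIV_imp_deriv)
qed

lemma U_op_eq_mult_power2: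
  fixes f g :: "complex \<Rightarrow> complex"
  assumes holg: "g holomorphic_on ball 0 1" and fg: "\<And>z. norm z < 1 \<Longrightarrow> f z = z * g z ^ 2"
    and z: "norm z < 1" "z \<noteq> 0" and gz: "g z \<noteq> 0"
  shows "U_op f z = (g z + 2 * z * deriv g z) / g z ^ 3 - 1"
  using z gz deriv_eq_mult_power2[OF holg fg z(1)]
  by (simp add: U_op_def fg[OF z(1)] field_simps power2_eq_square power3_eq_cube)

theorem theorem4p1:
  fixes f g :: "complex \<Rightarrow> complex"
  assumes "classU1 f"
    and "g holomorphic_on ball 0 1"
    and "g 0 = 1"
    and "\<forall>z\<in>ball 0 1 - {0}. (g z)^2 = f z / z"
  shows "\<forall>z\<in>ball 0 1. Re (g z) > alpha (cmod (deriv (deriv f) 0 / 2))"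
proof
  fix z :: complex assume "z \<in> ball 0 1"
  have f0: "f 0 = 0" and fnz: "\<And>z. norm z < 1 \<Longrightarrow> z \<noteq> 0 \<Longrightarrow> f z \<noteq> 0"
    and Uf: "\<And>z. norm z < 1 \<Longrightarrow> z \<noteq> 0 \<Longrightarrow> norm (U_op f z) < 1"
    using assms(1) by (auto simp: classU1_def classA_def)
  have fg: "f z = z * g z ^ 2" if "norm z < 1" for z
    using assms(4) f0 that by (cases "z = 0") (auto simp: field_simps)
  have gnz: "g z \<noteq> 0" if "norm z < 1" for z
    using fnz[OF that] fg[OF that] assms(3) by (cases "z = 0") auto
  define x where "x = cmod (deriv (deriv f) 0 / 2)"
  have x: "norm (deriv g 0) = x/2"
    by (simp add: x_def deriv2_at_0_eq_mult_power2[OF assms(2) fg] assms(3) norm_mult)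
  obtain L where "alpha x \<le> L" "1/2 \<le> L" "L \<le> 2/3" "L/(1-L) \<le> max 1 (2/(1 + x/(4*(1-L))))"
    using alpha_admissible[of x] by (auto simp: x_def)
  moreover have "x/(4*(1-L)) = norm (deriv g 0) / (2*(1-L))" by (simp add: x)
  ultimately have "L < Re (g z)"
    using \<open>z \<in> ball 0 1\<close> Uf gnz
    by (intro Re_gt_of_norm_U_lt_1[OF assms(2,3)]) (auto simp: U_op_eq_mult_power2[OF assms(2) fg, symmetric])
  moreover note \<open>alpha x \<le> L\<close>
  ultimately show "Re (g z) > alpha x" by simp
qed

end
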